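(* Let $a,b\in C\ell_2$. Then (1) $L(a)L(a^+)L(a)=L(a)$, $L(a^+)L(a)L(a^+)=L(a^+)$, $L(a)L(a^+)=(L(a)L(a^+))^T$, $L(a^+)L(a)=(L(a^+)L(a))^T$; (2) $R(a)R(a^+)R(a)=R(a)$, $R(a^+)R(a)R(a^+)=R(a^+)$, $R(a)R(a^+)=(R(a)R(a^+))^T$, $R(a^+)R(a)=(R(a^+)R(a))^T$; (3) $(L(a)R(b))^+=L(a^+)R(b^+)$, where the left side is the Moore–Penrose inverse of the real matrix $L(a)R(b)$.
   Context: $C\ell_2$ is the 4-dimensional real associative algebra with basis $1,e_1,e_2,e_3$ and multiplication $e_1^2=e_2^2=1$, $e_3^2=-1$, $e_1e_2=e_3=-e_2e_1$, $e_1e_3=e_2=-e_3e_1$, $e_3e_2=e_1=-e_2e_3$. For $a=a_0+a_1e_1+a_2e_2+a_3e_3$ ($a_i\in\mathbb{R}$): $\bar a=a_0-a_1e_1-a_2e_2-a_3e_3$, $a'=a_0+a_1e_1+a_2e_2-a_3e_3$, $H_a=a_0^2-a_1^2-a_2^2+a_3^2$, $$L(a)=\begin{pmatrix} a_0&a_1&a_2&-a_3\\ a_1&a_0&a_3&-a_2\\ a_2&-a_3&a_0&a_1\\ a_3&-a_2&a_1&a_0\end{pmatrix},\qquad R(a)=\begin{pmatrix} a_0&a_1&a_2&-a_3\\ a_1&a_0&-a_3&a_2\\ a_2&a_3&a_0&-a_1\\ a_3&a_2&-a_1&a_0\end{pmatrix}$$ (matrices of $x\mapsto ax$ and $x\mapsto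 xa$ in coordinates $(x_0,x_1,x_2,x_3)^T$). The element $a^+$ is defined by $a^+=0$ if $a=0$, $a^+=\bar a/H_a$ if $H_a\neq0$, and $a^+=a'/(4(a_0^2+a_3^2))$ if $H_a=0$, $a\neq 0$. The Moore–Penrose inverse $A^+$ of a real matrix $A$ is the unique $X$ with $AXA=A$, $XAX=X$, $(AX)^T=AX$, $(XA)^T=XA$. *)

theory Defs
  imports "HOL-Analysis.Analysis"
begin

text \<open>Elements a = a0 + a1 e1 + a2 e2 + a3 e3 of the real Clifford algebra Cl_2,
  represented by their four real coordinates.\<close>
datatype cl2 = Cl2 (c0: real) (c1: real) (c2: real) (c3: real)

definition cl2_zero :: cl2 where "cl2_zero = Cl2 0 0 0 0"

definition cl2_scale :: "real \<Rightarrow> cl2 \<Rightarrow> cl2" where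
  "cl2_scale r a = Cl2 (r * c0 a) (r * c1 a) (r * c2 a) (r * c3 a)"

definition cl2_bar :: "cl2 \<Rightarrow> cl2" where
  "cl2_bar a = Cl2 (c0 a) (- c1 a) (- c2 a) (- c3 a)"

definition cl2_prime :: "cl2 \<Rightarrow> cl2" where
  "cl2_prime a = Cl2 (c0 a) (c1 a) (c2 a) (- c3 a)"

definition cl2_H :: "cl2 \<Rightarrow> real" where
  "cl2_H a = (c0 a)^2 - (c1 a)^2 - (c2 a)^2 + (c3 a)^2"

definition cl2_plus :: "cl2 \<Rightarrow> cl2" where
  "cl2_plus a =
     (if a = cl2_zero then cl2_zero
      else if cl2_H a \<noteq> 0 then cl2_scale (1 / cl2_H a) (cl2_bar a)
      else cl2_scale (1 / (4 * ((c0 a)^2 + (c3 a)^2))) (cl2_prime a))"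

text \<open>Left and right multiplication matrices (rows listed top to bottom).\<close>
definition Lmat :: "cl2 \<Rightarrow> real^4^4" where
  "Lmat a = (case a of Cl2 a0 a1 a2 a3 \<Rightarrow>
     vector [vector [a0, a1, a2, -a3],
             vector [a1, a0, a3, -a2],
             vector [a2, -a3, a0, a1],
             vector [a3, -a2, a1, a0]])"

definition Rmat :: "cl2 \<Rightarrow> real^4^4" where
  "Rmat a = (case a of Cl2 a0 a1 a2 a3 \<Rightarrow>
     vector [vector [a0, a1, a2, -a3],
             vector [a1, a0, -a3, a2],
             vector [a2, a3, a0, -a1],
             vector [a3, a2, -a1, a0]])"

definition is_mp_inverse :: "real^'n^'n \<Rightarrow> real^'n^'n \<Rightarrow> bool" where
  "is_mp_inverse A X \<longleftrightarrow>
     A ** X ** A = A \<and> X ** A ** X = X \<and>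
     transpose (A ** X) = A ** X \<and> transpose (X ** A) = X ** A"

definition mp_inverse :: "real^'n^'n \<Rightarrow> real^'n^'n" where
  "mp_inverse A = (THE X. is_mp_inverse A X)"

end

theory Submission
  imports Defs
begin

text \<open>L and R are the left and right regular representations of Cl_2, so L(a) and R(b) commute,
  and transposition corresponds to the anti-involution a \<mapsto> a'. Hence the Moore-Penrose
  conditions for L(a) and R(a) reduce to a a^+ a = a, a^+ a a^+ = a^+ and the invariance of
  a a^+ and a^+ a under '. These hold since a a-bar = a-bar a = H_a when H_a \<noteq> 0, while
  a a' a = 4 (a_0^2 + a_3^2) a when H_a = 0. Since the matrices commute, the conditions for the
  product L(a) R(b) follow, and the Moore-Penrose inverse is unique.\<close>

lemma vector_4 [simp]:
  "(vector [x, y, z, w] :: ('a::zero)^4) $ 1 = x"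
  "(vector [x, y, z, w] :: ('a::zero)^4) $ 2 = y"
  "(vector [x, y, z, w] :: ('a::zero)^4) $ 3 = z"
  "(vector [x, y, z, w] :: ('a::zero)^4) $ 4 = w"
  unfolding vector_def by simp_all

definition cl2_one :: cl2 where "cl2_one = Cl2 1 0 0 0"

definition cl2_mul :: "cl2 \<Rightarrow> cl2 \<Rightarrow> cl2" where
  "cl2_mul a b = (case a of Cl2 a0 a1 a2 a3 \<Rightarrow> case b of Cl2 b0 b1 b2 b3 \<Rightarrow>
     Cl2 (a0*b0 + a1*b1 + a2*b2 - a3*b3)
         (a0*b1 + a1*b0 - a2*b3 + a3*b2)
         (a0*b2 + a2*b0 + a1*b3 - a3*b1)
         (a0*b3 + a3*b0 + a1*b2 - a2*b1))"

lemma cl2_mul_assoc: "cl2_mul (cl2_mul a b) c = cl2_mul a (cl2_mul b c)"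
  by (cases a; cases b; cases c) (simp add: cl2_mul_def algebra_simps)

lemma cl2_mul_one_left [simp]: "cl2_mul cl2_one a = a"
  and cl2_mul_one_right [simp]: "cl2_mul a cl2_one = a"
  by (cases a; simp add: cl2_mul_def cl2_one_def)+

lemma cl2_mul_zero_left [simp]: "cl2_mul cl2_zero a = cl2_zero"
  and cl2_mul_zero_right [simp]: "cl2_mul a cl2_zero = cl2_zero"
  by (cases a; simp add: cl2_mul_def cl2_zero_def)+

lemma cl2_mul_scale_left [simp]: "cl2_mul (cl2_scale r a) b = cl2_scale r (cl2_mul a b)"
  and cl2_mul_scale_right [simp]: "cl2_mul a (cl2_scale r b) = cl2_scale r (cl2_mul a b)"
  by (cases a; cases b; simp add: cl2_mul_def cl2_scale_def algebra_simps)+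

lemma cl2_scale_scale [simp]: "cl2_scale r (cl2_scale s a) = cl2_scale (r * s) a"
  by (simp add: cl2_scale_def)

lemma cl2_scale_one [simp]: "cl2_scale 1 a = a"
  by (cases a) (simp add: cl2_scale_def)

lemma cl2_prime_prime [simp]: "cl2_prime (cl2_prime a) = a"
  by (cases a) (simp add: cl2_prime_def)

lemma cl2_prime_mul: "cl2_prime (cl2_mul a b) = cl2_mul (cl2_prime b) (cl2_prime a)"
  by (cases a; cases b) (simp add: cl2_mul_def cl2_prime_def algebra_simps)

lemma cl2_prime_scale [simp]: "cl2_prime (cl2_scale r a) = cl2_scale r (cl2_prime a)"
  by (simp add: cl2_prime_def cl2_scale_def)

lemma cl2_prime_one [simp]: "cl2_prime cl2_one = cl2_one"
  and cl2_prime_zero [simp]: "cl2_prime cl2_zero = cl2_zero"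
  by (simp_all add: cl2_prime_def cl2_one_def cl2_zero_def)

lemma cl2_mul_bar: "cl2_mul a (cl2_bar a) = cl2_scale (cl2_H a) cl2_one"
  and cl2_mul_bar_left: "cl2_mul (cl2_bar a) a = cl2_scale (cl2_H a) cl2_one"
  by (cases a; simp add: cl2_mul_def cl2_bar_def cl2_H_def cl2_scale_def cl2_one_def
      power2_eq_square algebra_simps)+

lemma cl2_mul_prime_mul_of_H_eq_0:
  assumes "cl2_H a = 0"
  shows "cl2_mul (cl2_mul a (cl2_prime a)) a = cl2_scale (4 * ((c0 a)^2 + (c3 a)^2)) a"
proof (cases a)
  case (Cl2 a0 a1 a2 a3)
  with assms have "a0^2 + a3^2 = a1^2 + a2^2" by (simp add: cl2_H_def)
  then show ?thesis
    unfolding Cl2 cl2_mul_def cl2_prime_def cl2_scale_def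
    by (simp only: cl2.case cl2.inject cl2.sel) (intro conjI; algebra)
qed

lemma cl2_H_eq_0_imp_c0_c3_nonzero:
  assumes "cl2_H a = 0" and "a \<noteq> cl2_zero"
  shows "(c0 a)^2 + (c3 a)^2 \<noteq> 0"
proof
  assume zero: "(c0 a)^2 + (c3 a)^2 = 0"
  then have "c0 a = 0" "c3 a = 0" by (simp_all add: sum_power2_eq_zero_iff)
  moreover have "(c1 a)^2 + (c2 a)^2 = 0" using assms(1) zero unfolding cl2_H_def by linarith
  then have "c1 a = 0" "c2 a = 0" by (simp_all add: sum_power2_eq_zero_iff)
  ultimately show False using assms(2) by (cases a) (simp add: cl2_zero_def)
qed

definition cl2_is_mp_inverse :: "cl2 \<Rightarrow> cl2 \<Rightarrow> bool" where
  "cl2_is_mp_inverse a p \<longleftrightarrow>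
     cl2_mul (cl2_mul a p) a = a \<and> cl2_mul (cl2_mul p a) p = p \<and>
     cl2_prime (cl2_mul a p) = cl2_mul a p \<and> cl2_prime (cl2_mul p a) = cl2_mul p a"

lemma cl2_is_mp_inverse_of_unit:
  assumes "cl2_mul a p = cl2_one" and "cl2_mul p a = cl2_one"
  shows "cl2_is_mp_inverse a p"
  using assms by (simp add: cl2_is_mp_inverse_def)

lemma cl2_is_mp_inverse_plus: "cl2_is_mp_inverse a (cl2_plus a)"
proof -
  consider "a = cl2_zero" | "cl2_H a \<noteq> 0" | "a \<noteq> cl2_zero" "cl2_H a = 0" by blast
  then show ?thesis
  proof cases
    case 1
    then show ?thesis by (simp add: cl2_is_mp_inverse_def cl2_plus_def)
  next
    case 2
    then have "a \<noteq> cl2_zero" by (auto simp: cl2_H_def cl2_zero_def)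
    with 2 show ?thesis
      by (intro cl2_is_mp_inverse_of_unit) (simp_all add: cl2_plus_def cl2_mul_bar cl2_mul_bar_left)
  next
    case 3
    define s where "s = 4 * ((c0 a)^2 + (c3 a)^2)"
    have "s \<noteq> 0"
      using cl2_H_eq_0_imp_c0_c3_nonzero[OF 3(2,1)] unfolding s_def by (metis mult_eq_0_iff zero_neq_numeral)
    have plus: "cl2_plus a = cl2_scale (1 / s) (cl2_prime a)"
      using 3 by (simp add: cl2_plus_def s_def)
    have "cl2_mul (cl2_mul a (cl2_prime a)) a = cl2_scale s a"
      using cl2_mul_prime_mul_of_H_eq_0[OF 3(2)] by (simp add: s_def)
    moreover from arg_cong[OF this, of cl2_prime]
    have "cl2_mul (cl2_mul (cl2_prime a) a) (cl2_prime a) = cl2_scale s (cl2_prime a)"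
      by (simp add: cl2_prime_mul cl2_mul_assoc)
    ultimately show ?thesis
      using \<open>s \<noteq> 0\<close> by (simp add: cl2_is_mp_inverse_def plus cl2_prime_mul power2_eq_square)
  qed
qed

lemma Lmat_mult: "Lmat a ** Lmat b = Lmat (cl2_mul a b)"
  by (cases a; cases b) (simp add: Lmat_def cl2_mul_def vec_eq_iff forall_4
      matrix_matrix_mult_def sum_4 algebra_simps)

lemma Rmat_mult: "Rmat a ** Rmat b = Rmat (cl2_mul b a)"
  by (cases a; cases b) (simp add: Rmat_def cl2_mul_def vec_eq_iff forall_4
      matrix_matrix_mult_def sum_4 algebra_simps)

lemma Lmat_Rmat_commute: "Lmat a ** Rmat b = Rmat b ** Lmat a"
  by (cases a; cases b) (simp add: Lmat_def Rmat_def vec_eq_iff forall_4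
      matrix_matrix_mult_def sum_4 algebra_simps)

lemma transpose_Lmat: "transpose (Lmat a) = Lmat (cl2_prime a)"
  by (cases a) (simp add: Lmat_def cl2_prime_def vec_eq_iff forall_4 transpose_def)

lemma transpose_Rmat: "transpose (Rmat a) = Rmat (cl2_prime a)"
  by (cases a) (simp add: Rmat_def cl2_prime_def vec_eq_iff forall_4 transpose_def)

lemma is_mp_inverse_Lmat:
  assumes "cl2_is_mp_inverse a p"
  shows "is_mp_inverse (Lmat a) (Lmat p)"
  using assms by (simp add: is_mp_inverse_def cl2_is_mp_inverse_def Lmat_mult transpose_Lmat)

lemma is_mp_inverse_Rmat:
  assumes "cl2_is_mp_inverse a p"
  shows "is_mp_inverse (Rmat a) (Rmat p)"
  using assms
  by (simp add: is_mp_inverse_def cl2_is_mp_inverse_def Rmat_mult transpose_Rmat cl2_mul_assoc)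

lemma is_mp_inverse_unique:
  fixes A X Y :: "real^'n^'n"
  assumes X: "is_mp_inverse A X" and Y: "is_mp_inverse A Y"
  shows "X = Y"
proof -
  have x1: "A ** X ** A = A" and x2: "X ** A ** X = X" and x3: "transpose (A ** X) = A ** X"
    and x4: "transpose (X ** A) = X ** A" using X by (auto simp: is_mp_inverse_def)
  have y1: "A ** Y ** A = A" and y2: "Y ** A ** Y = Y" and y3: "transpose (A ** Y) = A ** Y"
    and y4: "transpose (Y ** A) = Y ** A" using Y by (auto simp: is_mp_inverse_def)
  have AtA_Y: "transpose A = transpose A ** A ** Y"
  proof -
    have "transpose A = transpose (A ** Y ** A)" using y1 by simp
    also have "\<dots> = transpose A ** transpose (A ** Y)" by (simp add: matrix_transpose_mul)
    also have "\<dots> = transpose A ** A ** Y" using y3 by (simp add: matrix_mul_assoc)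
    finally show ?thesis .
  qed
  have X_AAt: "transpose A = X ** A ** transpose A"
  proof -
    have "transpose A = transpose (A ** X ** A)" using x1 by simp
    also have "\<dots> = transpose (X ** A) ** transpose A"
      by (simp add: matrix_transpose_mul matrix_mul_assoc)
    also have "\<dots> = X ** A ** transpose A" using x4 by simp
    finally show ?thesis .
  qed
  have "X = X ** transpose (A ** X)" using x2 x3 by (simp add: matrix_mul_assoc)
  also have "\<dots> = X ** transpose X ** transpose A" by (simp add: matrix_transpose_mul matrix_mul_assoc)
  also have "\<dots> = X ** transpose X ** (transpose A ** A ** Y)" using AtA_Y by simp
  also have "\<dots> = X ** transpose (A ** X) ** A ** Y" by (simp add: matrix_transpose_mul matrix_mul_assoc)
  also have "\<dots> = X ** A ** Y" using x2 x3 by (simp add: matrix_mul_assoc)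
  finally have X_eq: "X = X ** A ** Y" .
  have "Y = transpose (Y ** A) ** Y" using y2 y4 by simp
  also have "\<dots> = transpose A ** transpose Y ** Y" by (simp add: matrix_transpose_mul)
  also have "\<dots> = (X ** A ** transpose A) ** transpose Y ** Y" using X_AAt by simp
  also have "\<dots> = X ** A ** transpose (Y ** A) ** Y" by (simp add: matrix_transpose_mul matrix_mul_assoc)
  also have "\<dots> = X ** A ** (Y ** A ** Y)" using y4 by (simp add: matrix_mul_assoc)
  also have "\<dots> = X ** A ** Y" using y2 by simp
  finally show ?thesis using X_eq by simp
qed

lemma mp_inverse_eqI:
  fixes A X :: "real^'n^'n"
  assumes "is_mp_inverse A X"
  shows "mp_inverse A = X"
  unfolding mp_inverse_def using assms is_mp_inverse_unique by blast

lemma is_mp_inverse_mult_commuting: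
  fixes A B X Y :: "real^'n^'n"
  assumes "is_mp_inverse A X" and "is_mp_inverse B Y"
    and AB: "A ** B = B ** A" and AY: "A ** Y = Y ** A"
    and XB: "X ** B = B ** X" and XY: "X ** Y = Y ** X"
  shows "is_mp_inverse (A ** B) (X ** Y)"
proof -
  have "A ** B ** (X ** Y) = A ** X ** (B ** Y)" and "X ** Y ** (A ** B) = X ** A ** (Y ** B)"
    using XB AY by (metis matrix_mul_assoc)+
  moreover have "A ** X ** (B ** Y) = B ** Y ** (A ** X)" and "X ** A ** (Y ** B) = Y ** B ** (X ** A)"
    using AB AY XB XY by (metis matrix_mul_assoc)+
  moreover have "A ** X ** (B ** Y) ** (A ** B) = A ** X ** A ** (B ** Y ** B)"
    and "X ** A ** (Y ** B) ** (X ** Y) = X ** A ** X ** (Y ** B ** Y)"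
    using AB AY XB XY by (metis matrix_mul_assoc)+
  ultimately show ?thesis
    using assms(1,2) by (simp add: is_mp_inverse_def matrix_transpose_mul)
qed

theorem proposition4p1:
  fixes a b :: cl2
  shows "Lmat a ** Lmat (cl2_plus a) ** Lmat a = Lmat a
       \<and> Lmat (cl2_plus a) ** Lmat a ** Lmat (cl2_plus a) = Lmat (cl2_plus a)
       \<and> Lmat a ** Lmat (cl2_plus a) = transpose (Lmat a ** Lmat (cl2_plus a))
       \<and> Lmat (cl2_plus a) ** Lmat a = transpose (Lmat (cl2_plus a) ** Lmat a)
       \<and> Rmat a ** Rmat (cl2_plus a) ** Rmat a = Rmat a
       \<and> Rmat (cl2_plus a) ** Rmat a ** Rmat (cl2_plus a) = Rmat (cl2_plus a)
       \<and> Rmat a ** Rmat (cl2_plus a) = transpose (Rmat a ** Rmat (cl2_plus a))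
       \<and> Rmat (cl2_plus a) ** Rmat a = transpose (Rmat (cl2_plus a) ** Rmat a)
       \<and> mp_inverse (Lmat a ** Rmat b) = Lmat (cl2_plus a) ** Rmat (cl2_plus b)"
proof -
  have L: "is_mp_inverse (Lmat a) (Lmat (cl2_plus a))"
    by (rule is_mp_inverse_Lmat[OF cl2_is_mp_inverse_plus])
  have R: "is_mp_inverse (Rmat a) (Rmat (cl2_plus a))"
    by (rule is_mp_inverse_Rmat[OF cl2_is_mp_inverse_plus])
  have "is_mp_inverse (Lmat a ** Rmat b) (Lmat (cl2_plus a) ** Rmat (cl2_plus b))"
    by (intro is_mp_inverse_mult_commuting is_mp_inverse_Lmat is_mp_inverse_Rmat
        cl2_is_mp_inverse_plus Lmat_Rmat_commute)
  then have "mp_inverse (Lmat a ** Rmat b) = Lmat (cl2_plus a) ** Rmat (cl2_plus b)"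
    by (rule mp_inverse_eqI)
  with L R show ?thesis
    by (simp add: is_mp_inverse_def)
qed

end
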